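(* Persistence equivalence and Forman equivalence of discrete Morse functions on graphs are independent: there exist a finite tree $T$ with $n$ simplices and discrete Morse functions $f,g\colon T\to[0,n]$ that are persistence equivalent but not Forman equivalent, and discrete Morse functions $f',g'\colon T\to[0,n]$ that are Forman equivalent but not persistence equivalent.
   Context: For a finite simple graph $G$, its simplices are its vertices and edges; write $v<e$ if vertex $v$ is an endpoint of edge $e$; $n$ is the total number of simplices. A discrete Morse function is a function $f$ from the simplices to $[0,n]$ such that: (i) $v<e$ implies $f(v)\le f(e)$; (ii) $\min f=0$; (iii) every value is attained by at most two simplices, and if $f(\sigma)=f(\tau)$ with $\sigma\neq\tau$ then one is an endpoint of the other; (iv) if a value $f(\sigma)$ is attained only by $\sigma$, then $f(\sigma)\in\mathbb{N}$; such $\sigma$ is critical, otherwise regular. The induced gradient vector field $V_f$ is the set of pairs $\{v<e\}$ with $f(v)=f(e)$ (the regular pairs). $f,g$ are Forman equivalent if $V_f=V_g$. With critical values $c_0<\dots<c_{m-1}$, the level subcomplexes $G_{c_i}=\{\sigma:f(\sigma)\le c_i\}$ form a filtration whose persistent homology (over a field) gives the persistence diagram $D_f$ (multiset of (birth value, death value) pairs, death $\infty$ for classes never dying); $f,g$ are persistence equivalent if $D_f=D_g$. *)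

theory Defs
  imports Main "HOL-Library.Function_Algebras" "HOL-Library.Extended_Real"
begin

text \<open>Its simplices are the vertices (as singletons) and the edges;
  the face relation v < e is proper inclusion.\<close>

definition simple_graph :: "'v set \<Rightarrow> 'v set set \<Rightarrow> bool" where
  "simple_graph V E \<longleftrightarrow> finite V \<and> (\<forall>e\<in>E. e \<subseteq> V \<and> card e = 2)"

definition simplices :: "'v set \<Rightarrow> 'v set set \<Rightarrow> 'v set set" where
  "simplices V E = (\<lambda>v. {v}) ` V \<union> E"

definition graph_connected :: "'v set \<Rightarrow> 'v set set \<Rightarrow> bool" where
  "graph_connected V E \<longleftrightarrow> V \<noteq> {} \<and>
     (\<forall>u\<in>V. \<forall>w\<in>V. (\<lambda>x y. {x, y} \<in> E)\<^sup>*\<^sup>* u w)"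

definition is_tree :: "'v set \<Rightarrow> 'v set set \<Rightarrow> bool" where
  "is_tree V E \<longleftrightarrow> simple_graph V E \<and> graph_connected V E \<and>
     (\<forall>e\<in>E. \<not> graph_connected V (E - {e}))"

definition critical :: "'v set \<Rightarrow> 'v set set \<Rightarrow> ('v set \<Rightarrow> real) \<Rightarrow> 'v set \<Rightarrow> bool" where
  "critical V E f \<sigma> \<longleftrightarrow> (\<forall>\<tau>\<in>simplices V E. f \<tau> = f \<sigma> \<longrightarrow> \<tau> = \<sigma>)"

definition dmf :: "'v set \<Rightarrow> 'v set set \<Rightarrow> ('v set \<Rightarrow> real) \<Rightarrow> bool" where
  "dmf V E f \<longleftrightarrow>
     (\<forall>\<sigma>\<in>simplices V E. 0 \<le> f \<sigma> \<and> f \<sigma> \<le> real (card (simplices V E))) \<and>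
     (\<forall>\<sigma>\<in>simplices V E. \<forall>\<tau>\<in>simplices V E. \<sigma> \<subset> \<tau> \<longrightarrow> f \<sigma> \<le> f \<tau>) \<and>
     (\<exists>\<sigma>\<in>simplices V E. f \<sigma> = 0) \<and>
     (\<forall>\<sigma>\<in>simplices V E. \<forall>\<tau>\<in>simplices V E. \<forall>\<rho>\<in>simplices V E.
        \<sigma> \<noteq> \<tau> \<and> \<sigma> \<noteq> \<rho> \<and> \<tau> \<noteq> \<rho> \<longrightarrow> \<not> (f \<sigma> = f \<tau> \<and> f \<tau> = f \<rho>)) \<and>
     (\<forall>\<sigma>\<in>simplices V E. \<forall>\<tau>\<in>simplices V E.
        \<sigma> \<noteq> \<tau> \<and> f \<sigma> = f \<tau> \<longrightarrow> \<sigma> \<subset> \<tau> \<or> \<tau> \<subset> \<sigma>) \<and>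
     (\<forall>\<sigma>\<in>simplices V E. critical V E f \<sigma> \<longrightarrow> f \<sigma> \<in> \<nat>)"

definition gradient_field :: "'v set \<Rightarrow> 'v set set \<Rightarrow> ('v set \<Rightarrow> real) \<Rightarrow> ('v set \<times> 'v set) set" where
  "gradient_field V E f =
     {(\<sigma>, \<tau>). \<sigma> \<in> simplices V E \<and> \<tau> \<in> simplices V E \<and> \<sigma> \<subset> \<tau> \<and> f \<sigma> = f \<tau>}"

definition forman_equiv :: "'v set \<Rightarrow> 'v set set \<Rightarrow> ('v set \<Rightarrow> real) \<Rightarrow> ('v set \<Rightarrow> real) \<Rightarrow> bool" where
  "forman_equiv V E f g \<longleftrightarrow> gradient_field V E f = gradient_field V E g"

definition crit_values :: "'v set \<Rightarrow> 'v set set \<Rightarrow> ('v set \<Rightarrow> real) \<Rightarrow> real set" where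
  "crit_values V E f = {f \<sigma> | \<sigma>. \<sigma> \<in> simplices V E \<and> critical V E f \<sigma>}"

definition ncrit :: "'v set \<Rightarrow> 'v set set \<Rightarrow> ('v set \<Rightarrow> real) \<Rightarrow> nat" where
  "ncrit V E f = card (crit_values V E f)"

definition cval :: "'v set \<Rightarrow> 'v set set \<Rightarrow> ('v set \<Rightarrow> real) \<Rightarrow> nat \<Rightarrow> real" where
  "cval V E f i = sorted_list_of_set (crit_values V E f) ! i"

definition level :: "'v set \<Rightarrow> 'v set set \<Rightarrow> ('v set \<Rightarrow> real) \<Rightarrow> nat \<Rightarrow> 'v set set" where
  "level V E f i = {\<sigma> \<in> simplices V E. f \<sigma> \<le> cval V E f i}"

definition chains :: "'k itself \<Rightarrow> 'v set set \<Rightarrow> nat \<Rightarrow> ('v set \<Rightarrow> 'k::field) set" where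
  "chains _ K p = {c. \<forall>\<sigma>. c \<sigma> \<noteq> 0 \<longrightarrow> \<sigma> \<in> K \<and> card \<sigma> = Suc p}"

text \<open>Incidence number [tau : sigma] for an oriented simplex (vertices ordered by the
  linear order on 'v): (-1)^(position of the removed vertex).\<close>
definition incidence :: "'v::linorder set \<Rightarrow> 'v set \<Rightarrow> 'k::field" where
  "incidence \<sigma> \<tau> = (-1) ^ card {x \<in> \<tau>. x < the_elem (\<tau> - \<sigma>)}"

text \<open>Simplicial boundary operator of the complex S (non-augmented).\<close>
definition bd :: "'v::linorder set set \<Rightarrow> ('v set \<Rightarrow> 'k::field) \<Rightarrow> 'v set \<Rightarrow> 'k" where
  "bd S c \<sigma> = (if \<sigma> \<in> S then
      (\<Sum>\<tau>\<in>S. if \<sigma> \<subset> \<tau> \<and> card \<tau> = Suc (card \<sigma>) then incidence \<sigma> \<tau> * c \<tau> else 0)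
    else 0)"

definition cycles :: "'k::field itself \<Rightarrow> 'v::linorder set set \<Rightarrow> 'v set set \<Rightarrow> nat \<Rightarrow> ('v set \<Rightarrow> 'k) set" where
  "cycles k S K p = {c \<in> chains k K p. bd S c = 0}"

definition boundaries :: "'k::field itself \<Rightarrow> 'v::linorder set set \<Rightarrow> 'v set set \<Rightarrow> nat \<Rightarrow> ('v set \<Rightarrow> 'k) set" where
  "boundaries k S K p = bd S ` chains k K (Suc p)"

definition kdim :: "'k::field itself \<Rightarrow> ('v set \<Rightarrow> 'k) set \<Rightarrow> nat" where
  "kdim _ W = vector_space.dim (\<lambda>(a::'k) (c::'v set \<Rightarrow> 'k) x. a * c x) W"

text \<open>Persistent Betti number beta_p^{i,j} = dim Z_p(K_i) / (Z_p(K_i) \<inter> B_p(K_j)),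
  the rank of H_p(K_i) -> H_p(K_j).\<close>
definition pbetti :: "'k::field itself \<Rightarrow> 'v::linorder set \<Rightarrow> 'v set set \<Rightarrow> ('v set \<Rightarrow> real)
    \<Rightarrow> nat \<Rightarrow> nat \<Rightarrow> nat \<Rightarrow> int" where
  "pbetti k V E f p i j =
     int (kdim k (cycles k (simplices V E) (level V E f i) p))
   - int (kdim k (cycles k (simplices V E) (level V E f i) p
                  \<inter> boundaries k (simplices V E) (level V E f j) p))"

text \<open>Convention K_{-1} = empty: beta^{i-1,j} = 0 for i = 0.\<close>
definition pbetti_prev :: "'k::field itself \<Rightarrow> 'v::linorder set \<Rightarrow> 'v set set \<Rightarrow> ('v set \<Rightarrow> real)
    \<Rightarrow> nat \<Rightarrow> nat \<Rightarrow> nat \<Rightarrow> int" where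
  "pbetti_prev k V E f p i j = (if i = 0 then 0 else pbetti k V E f p (i - 1) j)"

definition pmult :: "'k::field itself \<Rightarrow> 'v::linorder set \<Rightarrow> 'v set set \<Rightarrow> ('v set \<Rightarrow> real)
    \<Rightarrow> nat \<Rightarrow> nat \<Rightarrow> nat \<Rightarrow> int" where
  "pmult k V E f p i j =
     (pbetti k V E f p i (j - 1) - pbetti k V E f p i j)
   - (pbetti_prev k V E f p i (j - 1) - pbetti_prev k V E f p i j)"

definition pmult_inf :: "'k::field itself \<Rightarrow> 'v::linorder set \<Rightarrow> 'v set set \<Rightarrow> ('v set \<Rightarrow> real)
    \<Rightarrow> nat \<Rightarrow> nat \<Rightarrow> int" where
  "pmult_inf k V E f p i =
     pbetti k V E f p i (ncrit V E f - 1) - pbetti_prev k V E f p i (ncrit V E f - 1)"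

text \<open>The p-dimensional persistence diagram, as a multiplicity function on
  (birth value, death value) pairs; death value \<infinity> for essential classes.\<close>
definition pers_diagram :: "'k::field itself \<Rightarrow> 'v::linorder set \<Rightarrow> 'v set set \<Rightarrow> ('v set \<Rightarrow> real)
    \<Rightarrow> nat \<Rightarrow> real \<times> ereal \<Rightarrow> int" where
  "pers_diagram k V E f p = (\<lambda>(b, d).
      (\<Sum>i<ncrit V E f. \<Sum>j\<in>{i<..<ncrit V E f}.
          if b = cval V E f i \<and> d = ereal (cval V E f j) then pmult k V E f p i j else 0)
    + (\<Sum>i<ncrit V E f. if b = cval V E f i \<and> d = \<infinity> then pmult_inf k V E f p i else 0))"

definition persistence_equiv :: "'k::field itself \<Rightarrow> 'v::linorder set \<Rightarrow> 'v set set
    \<Rightarrow> ('v set \<Rightarrow> real) \<Rightarrow> ('v set \<Rightarrow> real) \<Rightarrow> bool" where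
  "persistence_equiv k V E f g \<longleftrightarrow> (\<forall>p. pers_diagram k V E f p = pers_diagram k V E g p)"

end

theory Submission
  imports Defs
begin

text \<open>Both examples live on the path 2 -- 3 -- 4. Persistence sees a discrete Morse function
  only through its critical values and the sublevel complexes at those values. Pairing vertex 3
  with the edge {2,3} or with {3,4} at the regular value 3/2, strictly between the critical values
  1 and 2, gives different gradients but the same filtration {2},{4} \<subseteq> whole path.
  Conversely, keeping the single regular pair ({3},{2,3}) and raising the critical edge {3,4} from
  2 to 3 does not change the gradient, but the 0-dimensional class born at vertex 4 at time 1 now
  dies at 3 instead of 2. That the point (1,2) has multiplicity one in the first diagram comes
  down to the boundaries of {2,3} and {3,4} spanning spaces of dimensions 1 and 2.\<close>

interpretation chain_space: vector_space "\<lambda>(a::'k::field) (c::'v set \<Rightarrow> 'k) x. a * c x"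
  by unfold_locales (auto simp: fun_eq_iff algebra_simps)

lemma kdim_eq_dim: "kdim TYPE('k::field) W = chain_space.dim (W :: ('v set \<Rightarrow> 'k) set)"
  unfolding kdim_def ..

lemma kdim_trivial: "W \<subseteq> {0} \<Longrightarrow> kdim TYPE('k::field) (W :: ('v set \<Rightarrow> 'k) set) = 0"
  unfolding kdim_eq_dim using chain_space.dim_le_card[of W "{}"] by (simp add: chain_space.span_empty)

lemma crit_values_eq_image: "crit_values V E f = f ` {\<sigma> \<in> simplices V E. critical V E f \<sigma>}"
  unfolding crit_values_def by auto

lemma cval_in_crit_values:
  assumes "i < ncrit V E f"
  shows "cval V E f i \<in> crit_values V E f"
proof -
  have "finite (crit_values V E f)"
    using assms unfolding ncrit_def by (metis card.infinite not_less_zero)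
  then show ?thesis
    using assms nth_mem[of i "sorted_list_of_set (crit_values V E f)"]
    unfolding ncrit_def cval_def by simp
qed

lemma cval_inj:
  assumes "i < ncrit V E f" "j < ncrit V E f" "cval V E f i = cval V E f j"
  shows "i = j"
  using assms nth_eq_iff_index_eq[OF distinct_sorted_list_of_set[of "crit_values V E f"] _ _]
  unfolding ncrit_def cval_def by simp

lemma pers_diagram_cval_pair:
  assumes "i < j" "j < ncrit V E f"
  shows "pers_diagram k V E f p (cval V E f i, ereal (cval V E f j)) = pmult k V E f p i j"
proof -
  let ?n = "ncrit V E f" and ?c = "cval V E f"
  have same_index: "(?c i = ?c i' \<and> ?c j = ?c j') \<longleftrightarrow> (i' = i \<and> j' = j)"
    if "i' < ?n" "j' < ?n" for i' j'
    using that assms cval_inj[of i V E f i'] cval_inj[of j V E f j'] by auto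
  have "(\<Sum>i'<?n. \<Sum>j'\<in>{i'<..<?n}. if ?c i = ?c i' \<and> ?c j = ?c j' then pmult k V E f p i' j' else 0)
      = (\<Sum>i'<?n. if i' = i then (\<Sum>j'\<in>{i'<..<?n}. if j' = j then pmult k V E f p i' j' else 0) else 0)"
    by (intro sum.cong refl) (simp add: same_index)
  also have "\<dots> = pmult k V E f p i j"
    using assms by simp
  finally show ?thesis
    unfolding pers_diagram_def by simp
qed

lemma pers_diagram_noncritical_death:
  assumes "d \<notin> crit_values V E f"
  shows "pers_diagram k V E f p (b, ereal d) = 0"
proof -
  have "d \<noteq> cval V E f j" if "j < ncrit V E f" for j
    using cval_in_crit_values[OF that] assms by auto
  then show ?thesis
    unfolding pers_diagram_def by simp
qed

lemma pers_diagram_cong: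
  assumes same_crit: "crit_values V E f = crit_values V E g"
    and same_levels: "\<And>i. i < ncrit V E f \<Longrightarrow> level V E f i = level V E g i"
  shows "pers_diagram k V E f p = pers_diagram k V E g p"
proof -
  have n: "ncrit V E g = ncrit V E f" and c: "cval V E g = cval V E f"
    unfolding ncrit_def cval_def[abs_def] same_crit by simp_all
  have pbetti: "pbetti k V E f p i j = pbetti k V E g p i j"
    if "i < ncrit V E f" "j < ncrit V E f" for i j
    using that same_levels unfolding pbetti_def by simp
  have pbetti_prev: "pbetti_prev k V E f p i j = pbetti_prev k V E g p i j"
    if "i < ncrit V E f" "j < ncrit V E f" for i j
    using that pbetti[of "i - 1" j] unfolding pbetti_prev_def by simp
  have "pmult k V E f p i j = pmult k V E g p i j"
    if "i < ncrit V E f" "j < ncrit V E f" for i j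
    using that pbetti pbetti_prev unfolding pmult_def by (simp add: less_imp_diff_less)
  moreover have "pmult_inf k V E f p i = pmult_inf k V E g p i" if "i < ncrit V E f" for i
    using that pbetti pbetti_prev unfolding pmult_inf_def n by simp
  ultimately show ?thesis
    unfolding pers_diagram_def n c
    by (intro ext) (auto intro!: arg_cong2[where f = plus] sum.cong)
qed

lemma persistence_equiv_if_same_sublevels:
  assumes same_crit: "crit_values V E f = crit_values V E g"
    and same_sublevels: "\<And>\<sigma> c. \<sigma> \<in> simplices V E \<Longrightarrow> c \<in> crit_values V E f \<Longrightarrow> f \<sigma> \<le> c \<longleftrightarrow> g \<sigma> \<le> c"
  shows "persistence_equiv k V E f g"
proof -
  have "cval V E g = cval V E f"
    unfolding cval_def[abs_def] same_crit ..
  then have "level V E f i = level V E g i" if "i < ncrit V E f" for i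
    using cval_in_crit_values[OF that] same_sublevels unfolding level_def by auto
  then show ?thesis
    unfolding persistence_equiv_def using pers_diagram_cong[OF same_crit] by blast
qed

lemma pmult_eq_boundary_dims:
  assumes "0 < i"
  shows "pmult k V E f p i j =
     (int (kdim k (cycles k (simplices V E) (level V E f i) p
                   \<inter> boundaries k (simplices V E) (level V E f j) p))
    - int (kdim k (cycles k (simplices V E) (level V E f i) p
                   \<inter> boundaries k (simplices V E) (level V E f (j - 1)) p)))
   - (int (kdim k (cycles k (simplices V E) (level V E f (i - 1)) p
                   \<inter> boundaries k (simplices V E) (level V E f j) p))
    - int (kdim k (cycles k (simplices V E) (level V E f (i - 1)) p
                   \<inter> boundaries k (simplices V E) (level V E f (j - 1)) p)))"
  using assms unfolding pmult_def pbetti_prev_def pbetti_def by simp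

lemma rtranclp_from_isolated_vertex:
  assumes "(\<lambda>x y. {x, y} \<in> E)\<^sup>*\<^sup>* a b" "\<And>y. {a, y} \<notin> E"
  shows "b = a"
  using assms by (induction rule: rtranclp_induct) auto

lemma chain_space_span_pair:
  "chain_space.span {a, b} = {x. \<exists>k m. x = (\<lambda>\<sigma>. k * (a :: 'v set \<Rightarrow> 'k::field) \<sigma> + m * b \<sigma>)}"
proof (intro set_eqI iffI)
  fix x :: "'v set \<Rightarrow> 'k"
  assume "x \<in> chain_space.span {a, b}"
  then obtain k m where "x - (\<lambda>\<sigma>. k * a \<sigma>) = (\<lambda>\<sigma>. m * b \<sigma>)"
    unfolding chain_space.span_insert[of a "{b}"] chain_space.span_singleton by blast
  then have "x = (\<lambda>\<sigma>. k * a \<sigma> + m * b \<sigma>)"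
    by (simp add: fun_eq_iff algebra_simps)
  then show "x \<in> {x. \<exists>k m. x = (\<lambda>\<sigma>. k * a \<sigma> + m * b \<sigma>)}" by blast
next
  fix x :: "'v set \<Rightarrow> 'k"
  assume "x \<in> {x. \<exists>k m. x = (\<lambda>\<sigma>. k * a \<sigma> + m * b \<sigma>)}"
  then obtain k m where "x = (\<lambda>\<sigma>. k * a \<sigma> + m * b \<sigma>)" by blast
  then have "x - (\<lambda>\<sigma>. k * a \<sigma>) = (\<lambda>\<sigma>. m * b \<sigma>)" by (simp add: fun_eq_iff)
  then show "x \<in> chain_space.span {a, b}"
    unfolding chain_space.span_insert[of a "{b}"] chain_space.span_singleton by blast
qed

abbreviation path_V :: "nat set" where "path_V \<equiv> {2, 3, 4}"
abbreviation path_E :: "nat set set" where "path_E \<equiv> {{2, 3}, {3, 4}}"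

lemma is_tree_path: "is_tree path_V path_E"
proof -
  let ?R = "\<lambda>x y. {x, y} \<in> path_E"
  have to_hub: "?R\<^sup>*\<^sup>* u 3" and from_hub: "?R\<^sup>*\<^sup>* 3 u" if "u \<in> path_V" for u
    using that by (auto intro: r_into_rtranclp simp: insert_commute)
  have "graph_connected path_V path_E"
    unfolding graph_connected_def using rtranclp_trans[OF to_hub from_hub] by blast
  moreover have "\<not> graph_connected path_V (path_E - {e})" if "e \<in> path_E" for e
  proof
    assume connected: "graph_connected path_V (path_E - {e})"
    define a :: nat where "a = (if e = {2, 3} then 2 else 4)"
    have isolated: "{a, y} \<notin> path_E - {e}" for y
      using that unfolding a_def by (auto simp: doubleton_eq_iff)
    have "a \<in> path_V"
      unfolding a_def by simp
    then have "(\<lambda>x y. {x, y} \<in> path_E - {e})\<^sup>*\<^sup>* a 3"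
      using connected unfolding graph_connected_def by blast
    then have "3 = a"
      using isolated by (rule rtranclp_from_isolated_vertex)
    then show False
      unfolding a_def by (simp split: if_splits)
  qed
  ultimately show ?thesis
    unfolding is_tree_def simple_graph_def by auto
qed

definition path_complex :: "nat set set" where
  "path_complex = {{2}, {3}, {4}, {2, 3}, {3, 4}}"

lemma simplices_path: "simplices path_V path_E = path_complex"
  unfolding simplices_def path_complex_def by auto

lemma sum_path_complex: "sum F path_complex = F {2} + F {3} + F {4} + F {2, 3} + F {3, 4}"
  unfolding path_complex_def by (simp add: doubleton_eq_iff add.assoc)

lemma card_path_complex: "card path_complex = 5"
  using sum_path_complex[of "\<lambda>_. 1 :: nat"] by simp

lemma incidence_path:
  "incidence {2::nat} {2, 3} = (-1 :: 'k::field)" "incidence {3::nat} {2, 3} = (1 :: 'k)"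
  "incidence {3::nat} {3, 4} = (-1 :: 'k)" "incidence {4::nat} {3, 4} = (1 :: 'k)"
proof -
  have removed_vertex_position:
    "{x \<in> {2::nat, 3}. x < the_elem ({2, 3} - {2})} = {2}"
    "{x \<in> {2::nat, 3}. x < the_elem ({2, 3} - {3})} = {}"
    "{x \<in> {3::nat, 4}. x < the_elem ({3, 4} - {3})} = {3}"
    "{x \<in> {3::nat, 4}. x < the_elem ({3, 4} - {4})} = {}"
    by (auto simp: insert_Diff_if)
  show "incidence {2::nat} {2, 3} = (-1 :: 'k::field)" "incidence {3::nat} {2, 3} = (1 :: 'k)"
    "incidence {3::nat} {3, 4} = (-1 :: 'k)" "incidence {4::nat} {3, 4} = (1 :: 'k)"
    unfolding incidence_def removed_vertex_position by simp_all
qed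

definition bd23 :: "nat set \<Rightarrow> 'k::field" where
  "bd23 \<sigma> = (if \<sigma> = {2} then -1 else if \<sigma> = {3} then 1 else 0)"

definition bd34 :: "nat set \<Rightarrow> 'k::field" where
  "bd34 \<sigma> = (if \<sigma> = {3} then -1 else if \<sigma> = {4} then 1 else 0)"

lemma bd_path_complex:
  "bd path_complex (c :: nat set \<Rightarrow> 'k::field) = (\<lambda>\<sigma>. c {2, 3} * bd23 \<sigma> + c {3, 4} * bd34 \<sigma>)"
  unfolding bd_def sum_path_complex
  by (auto simp: fun_eq_iff incidence_path bd23_def bd34_def path_complex_def psubset_eq doubleton_eq_iff)

definition left_complex :: "nat set set" where
  "left_complex = {{2}, {3}, {4}, {2, 3}}"

lemma boundaries_left_complex:
  "boundaries TYPE('k::field) path_complex left_complex 0 = chain_space.span {bd23 :: nat set \<Rightarrow> 'k}"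
proof -
  have "bd path_complex ` chains TYPE('k) left_complex 1 = range (\<lambda>k \<sigma>. k * (bd23 :: nat set \<Rightarrow> 'k) \<sigma>)"
  proof (intro set_eqI iffI)
    fix x assume "x \<in> bd path_complex ` chains TYPE('k) left_complex 1"
    then obtain c where "c \<in> chains TYPE('k) left_complex 1" and x: "x = bd path_complex c" by blast
    then have "c {3, 4} = 0"
      unfolding chains_def left_complex_def by (auto simp: doubleton_eq_iff)
    then show "x \<in> range (\<lambda>k \<sigma>. k * bd23 \<sigma>)"
      unfolding x bd_path_complex by auto
  next
    fix x assume "x \<in> range (\<lambda>k \<sigma>. k * (bd23 :: nat set \<Rightarrow> 'k) \<sigma>)"
    then obtain k where x: "x = (\<lambda>\<sigma>. k * bd23 \<sigma>)" by blast
    let ?c = "\<lambda>\<sigma>. if \<sigma> = {2, 3} then k else 0"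
    have "?c \<in> chains TYPE('k) left_complex 1" and "bd path_complex ?c = x"
      unfolding chains_def left_complex_def x bd_path_complex by (auto simp: doubleton_eq_iff)
    then show "x \<in> bd path_complex ` chains TYPE('k) left_complex 1" by blast
  qed
  then show ?thesis
    unfolding boundaries_def chain_space.span_singleton by simp
qed

lemma boundaries_path_complex:
  "boundaries TYPE('k::field) path_complex path_complex 0 = chain_space.span {bd23 :: nat set \<Rightarrow> 'k, bd34}"
proof -
  have "bd path_complex ` chains TYPE('k) path_complex 1
      = {x. \<exists>k m. x = (\<lambda>\<sigma>. k * (bd23 :: nat set \<Rightarrow> 'k) \<sigma> + m * bd34 \<sigma>)}"
  proof (intro set_eqI iffI)
    fix x assume "x \<in> bd path_complex ` chains TYPE('k) path_complex 1"
    then show "x \<in> {x. \<exists>k m. x = (\<lambda>\<sigma>. k * bd23 \<sigma> + m * bd34 \<sigma>)}"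
      by (auto simp: bd_path_complex)
  next
    fix x assume "x \<in> {x. \<exists>k m. x = (\<lambda>\<sigma>. k * (bd23 :: nat set \<Rightarrow> 'k) \<sigma> + m * bd34 \<sigma>)}"
    then obtain k m where x: "x = (\<lambda>\<sigma>. k * bd23 \<sigma> + m * bd34 \<sigma>)" by blast
    let ?c = "\<lambda>\<sigma>. if \<sigma> = {2, 3} then k else if \<sigma> = {3, 4} then m else 0"
    have "?c \<in> chains TYPE('k) path_complex 1"
      unfolding chains_def path_complex_def by auto
    moreover have "bd path_complex ?c = x"
      unfolding x bd_path_complex by (auto simp: doubleton_eq_iff)
    ultimately show "x \<in> bd path_complex ` chains TYPE('k) path_complex 1" by blast
  qed
  then show ?thesis
    unfolding boundaries_def chain_space_span_pair by simp
qed

lemma bd23_not_in_span_bd34: "bd23 \<notin> chain_space.span {bd34 :: nat set \<Rightarrow> 'k::field}"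
proof
  assume "bd23 \<in> chain_space.span {bd34 :: nat set \<Rightarrow> 'k}"
  then obtain k where "bd23 = (\<lambda>\<sigma>. k * (bd34 :: nat set \<Rightarrow> 'k) \<sigma>)"
    unfolding chain_space.span_singleton by blast
  then have "(bd23 :: nat set \<Rightarrow> 'k) {2} = k * bd34 {2}" by metis
  then show False by (simp add: bd23_def bd34_def)
qed

lemma dim_span_bd23: "chain_space.dim (chain_space.span {bd23 :: nat set \<Rightarrow> 'k::field}) = 1"
proof -
  have "bd23 \<notin> chain_space.span ({} :: (nat set \<Rightarrow> 'k) set)"
    using bd23_not_in_span_bd34 chain_space.span_mono[of "{}" "{bd34}"] by blast
  then have "chain_space.independent {bd23 :: nat set \<Rightarrow> 'k}"
    by (auto intro: chain_space.independent_insertI chain_space.independent_empty)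
  then show ?thesis
    using chain_space.dim_span_eq_card_independent by fastforce
qed

lemma dim_span_bd23_bd34: "chain_space.dim (chain_space.span {bd23 :: nat set \<Rightarrow> 'k::field, bd34}) = 2"
proof -
  have "bd34 \<notin> chain_space.span ({} :: (nat set \<Rightarrow> 'k) set)"
    by (auto simp: chain_space.span_empty bd34_def fun_eq_iff zero_fun_def)
  then have "chain_space.independent {bd34 :: nat set \<Rightarrow> 'k}"
    by (auto intro: chain_space.independent_insertI chain_space.independent_empty)
  then have "chain_space.independent {bd23 :: nat set \<Rightarrow> 'k, bd34}"
    using bd23_not_in_span_bd34 by (rule chain_space.independent_insertI[rotated])
  moreover have "bd23 \<noteq> (bd34 :: nat set \<Rightarrow> 'k)"
    using bd23_not_in_span_bd34 chain_space.span_base by blast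
  ultimately show ?thesis
    using chain_space.dim_span_eq_card_independent by fastforce
qed

lemma span_bd23_bd34_subset_cycles_left:
  "chain_space.span {bd23, bd34} \<subseteq> cycles TYPE('k::field) path_complex left_complex 0"
proof
  fix x :: "nat set \<Rightarrow> 'k" assume "x \<in> chain_space.span {bd23, bd34}"
  then obtain k m where x: "x = (\<lambda>\<sigma>. k * bd23 \<sigma> + m * bd34 \<sigma>)"
    unfolding chain_space_span_pair by blast
  have "x \<in> chains TYPE('k) left_complex 0"
    unfolding chains_def x by (auto simp: bd23_def bd34_def left_complex_def split: if_splits)
  moreover have "bd path_complex x = 0"
    unfolding bd_path_complex x by (simp add: bd23_def bd34_def doubleton_eq_iff zero_fun_def)
  ultimately show "x \<in> cycles TYPE('k) path_complex left_complex 0"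
    unfolding cycles_def by blast
qed

lemma cycles_vertex2_inter_span_bd23_bd34:
  "cycles TYPE('k::field) path_complex {{2}} 0 \<inter> chain_space.span {bd23, bd34} \<subseteq> {0}"
proof
  fix x :: "nat set \<Rightarrow> 'k"
  assume x_in: "x \<in> cycles TYPE('k) path_complex {{2}} 0 \<inter> chain_space.span {bd23, bd34}"
  then obtain k m where x: "x = (\<lambda>\<sigma>. k * bd23 \<sigma> + m * bd34 \<sigma>)"
    unfolding chain_space_span_pair by blast
  have "x {4} = 0" "x {3} = 0"
    using x_in unfolding cycles_def chains_def by auto
  then have "m = 0" "k = 0"
    unfolding x by (simp_all add: bd23_def bd34_def)
  then show "x \<in> {0}"
    unfolding x by (simp add: zero_fun_def)
qed

lemma path_complex_cases [consumes 1]: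
  assumes "\<sigma> \<in> path_complex"
  obtains "\<sigma> = {2}" | "\<sigma> = {3}" | "\<sigma> = {4}" | "\<sigma> = {2, 3}" | "\<sigma> = {3, 4}"
  using assms unfolding path_complex_def by blast

definition path_incidences :: "(nat set \<times> nat set) set" where
  "path_incidences = {({2}, {2, 3}), ({3}, {2, 3}), ({3}, {3, 4}), ({4}, {3, 4})}"

lemma psubset_path_complex_iff:
  assumes "\<sigma> \<in> path_complex" "\<tau> \<in> path_complex"
  shows "\<sigma> \<subset> \<tau> \<longleftrightarrow> (\<sigma>, \<tau>) \<in> path_incidences"
  using assms unfolding path_incidences_def
  by (elim path_complex_cases) (simp_all add: psubset_eq doubleton_eq_iff)

lemma mem_gradient_field_path:
  "(\<sigma>, \<tau>) \<in> gradient_field path_V path_E f \<longleftrightarrow> (\<sigma>, \<tau>) \<in> path_incidences \<and> f \<sigma> = f \<tau>"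
proof -
  have "\<sigma> \<in> path_complex \<and> \<tau> \<in> path_complex" if "(\<sigma>, \<tau>) \<in> path_incidences"
    using that unfolding path_incidences_def path_complex_def by auto
  then show ?thesis
    unfolding gradient_field_def simplices_path using psubset_path_complex_iff by auto
qed

lemma forman_equiv_path_iff:
  "forman_equiv path_V path_E f g \<longleftrightarrow> (\<forall>(\<sigma>, \<tau>) \<in> path_incidences. f \<sigma> = f \<tau> \<longleftrightarrow> g \<sigma> = g \<tau>)"
  unfolding forman_equiv_def set_eq_iff by (auto simp: mem_gradient_field_path)

definition edge34_at :: "real \<Rightarrow> nat set \<Rightarrow> real" where
  "edge34_at t \<sigma> =
     (if \<sigma> = {2} then 0 else if \<sigma> = {3} \<or> \<sigma> = {2, 3} then 1/2 else if \<sigma> = {4} then 1 else t)"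

lemma dmf_edge34_at:
  assumes "t \<in> \<nat>" "1 < t" "t \<le> 5"
  shows "dmf path_V path_E (edge34_at t)"
  using assms unfolding dmf_def simplices_path card_path_complex critical_def
  by (simp add: path_complex_def psubset_eq doubleton_eq_iff edge34_at_def)

lemma crit_values_edge34_at:
  assumes "1 < t"
  shows "crit_values path_V path_E (edge34_at t) = {0, 1, t}"
proof -
  have "critical path_V path_E (edge34_at t) \<sigma> \<longleftrightarrow> \<sigma> \<notin> {{3}, {2, 3}}" if "\<sigma> \<in> path_complex" for \<sigma>
    using that assms unfolding critical_def simplices_path
    by (cases rule: path_complex_cases) (simp_all add: path_complex_def doubleton_eq_iff edge34_at_def)
  then have "{\<sigma> \<in> simplices path_V path_E. critical path_V path_E (edge34_at t) \<sigma>}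
      = path_complex - {{3}, {2, 3}}"
    unfolding simplices_path by blast
  also have "\<dots> = {{2}, {4}, {3, 4}}"
    unfolding path_complex_def by (simp add: doubleton_eq_iff insert_Diff_if insert_commute)
  finally have "crit_values path_V path_E (edge34_at t) = edge34_at t ` {{2}, {4}, {3, 4}}"
    unfolding crit_values_eq_image by (rule arg_cong)
  moreover have "edge34_at t {2} = 0" "edge34_at t {4} = 1" "edge34_at t {3, 4} = t"
    by (simp_all add: edge34_at_def doubleton_eq_iff)
  ultimately show ?thesis
    by (simp only: image_insert image_empty)
qed

lemma forman_equiv_edge34_at:
  assumes "1 < s" "1 < t"
  shows "forman_equiv path_V path_E (edge34_at s) (edge34_at t)"
  using assms unfolding forman_equiv_path_iff path_incidences_def
  by (simp add: edge34_at_def doubleton_eq_iff)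

lemma cval_edge34_at:
  assumes "1 < t"
  shows "ncrit path_V path_E (edge34_at t) = 3"
    and "cval path_V path_E (edge34_at t) 0 = 0"
    and "cval path_V path_E (edge34_at t) 1 = 1"
    and "cval path_V path_E (edge34_at t) 2 = t"
proof -
  have "sorted_list_of_set {0, 1, t} = [0, 1, t]"
    using assms by (subst sorted_list_of_set_unique[symmetric]) simp_all
  then show "ncrit path_V path_E (edge34_at t) = 3"
    and "cval path_V path_E (edge34_at t) 0 = 0"
    and "cval path_V path_E (edge34_at t) 1 = 1"
    and "cval path_V path_E (edge34_at t) 2 = t"
    using assms unfolding ncrit_def cval_def crit_values_edge34_at[OF assms] by simp_all
qed

lemma level_edge34_at:
  assumes "1 < t"
  shows "level path_V path_E (edge34_at t) 0 = {{2}}"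
    and "level path_V path_E (edge34_at t) 1 = left_complex"
    and "level path_V path_E (edge34_at t) 2 = path_complex"
  using assms unfolding level_def cval_edge34_at[OF assms] simplices_path
  by (auto simp: path_complex_def left_complex_def edge34_at_def doubleton_eq_iff)

lemma pmult_edge34_at:
  assumes "1 < t"
  shows "pmult TYPE('k::field) path_V path_E (edge34_at t) 0 1 2 = 1"
proof -
  let ?Z = "\<lambda>K. cycles TYPE('k) path_complex K 0"
  let ?B = "\<lambda>K. boundaries TYPE('k) path_complex K 0"
  have B_left: "?B left_complex \<subseteq> chain_space.span {bd23, bd34}"
    unfolding boundaries_left_complex by (rule chain_space.span_mono) auto
  have B_path: "?B path_complex = chain_space.span {bd23, bd34}"
    by (rule boundaries_path_complex)
  have "?Z left_complex \<inter> ?B path_complex = chain_space.span {bd23, bd34}"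
    using span_bd23_bd34_subset_cycles_left[where 'k = 'k] unfolding B_path by blast
  then have "kdim TYPE('k) (?Z left_complex \<inter> ?B path_complex) = 2"
    unfolding kdim_eq_dim by (simp only: dim_span_bd23_bd34)
  moreover have "?Z left_complex \<inter> ?B left_complex = chain_space.span {bd23}"
    using B_left span_bd23_bd34_subset_cycles_left[where 'k = 'k]
    unfolding boundaries_left_complex by blast
  then have "kdim TYPE('k) (?Z left_complex \<inter> ?B left_complex) = 1"
    unfolding kdim_eq_dim by (simp only: dim_span_bd23)
  moreover have "kdim TYPE('k) (?Z {{2}} \<inter> ?B K) = 0" if "K \<in> {left_complex, path_complex}" for K
    using that B_left B_path cycles_vertex2_inter_span_bd23_bd34[where 'k = 'k]
    by (intro kdim_trivial) auto
  ultimately show ?thesis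
    using pmult_eq_boundary_dims[of 1 "TYPE('k)" path_V path_E "edge34_at t" 0 2]
    unfolding simplices_path
    by (simp add: level_edge34_at[OF assms] level_edge34_at(2)[OF assms, unfolded One_nat_def])
qed

lemma pers_diagram_edge34_at:
  assumes "1 < t"
  shows "pers_diagram TYPE('k::field) path_V path_E (edge34_at t) 0 (1, ereal t) = 1"
proof -
  have "pers_diagram TYPE('k) path_V path_E (edge34_at t) 0
      (cval path_V path_E (edge34_at t) 1, ereal (cval path_V path_E (edge34_at t) 2))
      = pmult TYPE('k) path_V path_E (edge34_at t) 0 1 2"
    using assms by (intro pers_diagram_cval_pair) (simp_all add: cval_edge34_at)
  then show ?thesis
    unfolding cval_edge34_at[OF assms] pmult_edge34_at[OF assms] .
qed

lemma not_persistence_equiv_edge34_at: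
  assumes "1 < s" "1 < t" "s \<noteq> t"
  shows "\<not> persistence_equiv TYPE('k::field) path_V path_E (edge34_at s) (edge34_at t)"
proof -
  have "t \<notin> crit_values path_V path_E (edge34_at s)"
    using assms by (simp add: crit_values_edge34_at)
  then have "pers_diagram TYPE('k) path_V path_E (edge34_at s) 0 (1, ereal t) = 0"
    by (rule pers_diagram_noncritical_death)
  then show ?thesis
    unfolding persistence_equiv_def using pers_diagram_edge34_at[OF assms(2), where 'k = 'k]
    by (metis zero_neq_one)
qed

definition pair_vertex3_with :: "nat set \<Rightarrow> nat set \<Rightarrow> real" where
  "pair_vertex3_with e \<sigma> =
     (if \<sigma> = {2} then 0 else if \<sigma> = {4} then 1 else if \<sigma> = {3} \<or> \<sigma> = e then 3/2 else 2)"

lemma path_edge_cases [consumes 1]: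
  assumes "e \<in> path_E"
  obtains "e = {2, 3}" | "e = {3, 4}"
  using assms by blast

lemma dmf_pair_vertex3_with:
  assumes "e \<in> path_E"
  shows "dmf path_V path_E (pair_vertex3_with e)"
  using assms unfolding dmf_def simplices_path card_path_complex critical_def
  by (cases rule: path_edge_cases)
    (simp_all add: path_complex_def psubset_eq doubleton_eq_iff pair_vertex3_with_def)

lemma crit_values_pair_vertex3_with:
  assumes "e \<in> path_E"
  shows "crit_values path_V path_E (pair_vertex3_with e) = {0, 1, 2}"
proof -
  have "critical path_V path_E (pair_vertex3_with e) \<sigma> \<longleftrightarrow> \<sigma> \<notin> {{3}, e}" if "\<sigma> \<in> path_complex" for \<sigma>
    using assms that unfolding critical_def simplices_path
    by (elim path_edge_cases path_complex_cases)
      (simp_all add: path_complex_def doubleton_eq_iff pair_vertex3_with_def)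
  then have "{\<sigma> \<in> simplices path_V path_E. critical path_V path_E (pair_vertex3_with e) \<sigma>}
      = path_complex - {{3}, e}"
    unfolding simplices_path by blast
  then have "crit_values path_V path_E (pair_vertex3_with e) = pair_vertex3_with e ` (path_complex - {{3}, e})"
    unfolding crit_values_eq_image by (rule arg_cong)
  also have "\<dots> = {0, 1, 2}"
    using assms unfolding path_complex_def
    by (cases rule: path_edge_cases)
      (simp_all add: doubleton_eq_iff insert_Diff_if pair_vertex3_with_def insert_commute)
  finally show ?thesis .
qed

lemma persistence_equiv_pair_vertex3_with:
  assumes "e \<in> path_E" "e' \<in> path_E"
  shows "persistence_equiv k path_V path_E (pair_vertex3_with e) (pair_vertex3_with e')"
proof (rule persistence_equiv_if_same_sublevels)
  show "crit_values path_V path_E (pair_vertex3_with e) = crit_values path_V path_E (pair_vertex3_with e')"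
    using assms by (simp add: crit_values_pair_vertex3_with)
  fix \<sigma> c assume "c \<in> crit_values path_V path_E (pair_vertex3_with e)"
  then have "c \<in> {0, 1, 2}"
    using assms by (simp add: crit_values_pair_vertex3_with)
  then show "pair_vertex3_with e \<sigma> \<le> c \<longleftrightarrow> pair_vertex3_with e' \<sigma> \<le> c"
    unfolding pair_vertex3_with_def by auto
qed

lemma not_forman_equiv_pair_vertex3_with:
  "\<not> forman_equiv path_V path_E (pair_vertex3_with {2, 3}) (pair_vertex3_with {3, 4})"
  unfolding forman_equiv_path_iff path_incidences_def
  by (simp add: doubleton_eq_iff pair_vertex3_with_def)

theorem mainTheorem9:
  shows "\<exists>(V::nat set) (E::nat set set). is_tree V E \<and>
     (\<exists>f g. dmf V E f \<and> dmf V E g \<and>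
        persistence_equiv TYPE('k::field) V E f g \<and> \<not> forman_equiv V E f g) \<and>
     (\<exists>f' g'. dmf V E f' \<and> dmf V E g' \<and>
        forman_equiv V E f' g' \<and> \<not> persistence_equiv TYPE('k::field) V E f' g')"
proof -
  let ?f = "pair_vertex3_with {2, 3}" and ?g = "pair_vertex3_with {3, 4}"
  let ?f' = "edge34_at 2" and ?g' = "edge34_at 3"
  have "dmf path_V path_E ?f" "dmf path_V path_E ?g" "dmf path_V path_E ?f'" "dmf path_V path_E ?g'"
    by (simp_all add: dmf_pair_vertex3_with dmf_edge34_at)
  moreover have "persistence_equiv TYPE('k) path_V path_E ?f ?g"
    by (simp add: persistence_equiv_pair_vertex3_with)
  moreover have "\<not> persistence_equiv TYPE('k) path_V path_E ?f' ?g'"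
    by (simp add: not_persistence_equiv_edge34_at)
  moreover have "forman_equiv path_V path_E ?f' ?g'"
    by (simp add: forman_equiv_edge34_at)
  ultimately show ?thesis
    using is_tree_path not_forman_equiv_pair_vertex3_with by blast
qed

end
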